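(* Let $(\mathbf A,\tau)$ be a subdirectly irreducible state-morphism algebra such that $\mathbf A$ is subdirectly reducible (i.e. not subdirectly irreducible). Then there is a subdirectly irreducible algebra $\mathbf B$ of the same type as $\mathbf A$ such that $(\mathbf A,\tau)$ is $\mathbf B$-subdiagonal, i.e. $(\mathbf A,\tau)$ embeds into the diagonal state-morphism algebra $D(\mathbf B)=(\mathbf B\times\mathbf B,\tau_B)$.
   Context: Let $F$ be an arbitrary algebraic type. A state-morphism on an algebra $\mathbf A$ of type $F$ is an endomorphism $\tau:\mathbf A\to\mathbf A$ with $\tau\circ\tau=\tau$; $(\mathbf A,\tau)$, viewed as an algebra of type $F$ extended by the unary operation $\tau$, is a state-morphism algebra, and subdirect irreducibility of $(\mathbf A,\tau)$ refers to this extended algebra. For an algebra $\mathbf B$ of type $F$, $D(\mathbf B)=(\mathbf B\times\mathbf B,\tau_B)$ with $\tau_B(x,y)=(x,x)$ is the diagonal state-morphism algebra; an embedding of state-morphism algebras is an injective homomorphism of type $F$ commuting with the unary operations. *)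

theory Defs
  imports Main
begin

text \<open>An algebraic type (signature) is given by an arity function ar on operation
symbols of type 'f.\<close>

definition algebra :: "('f \<Rightarrow> nat) \<Rightarrow> 'a set \<Rightarrow> ('f \<Rightarrow> 'a list \<Rightarrow> 'a) \<Rightarrow> bool" where
  "algebra ar A f \<longleftrightarrow> A \<noteq> {} \<and>
     (\<forall>s xs. length xs = ar s \<and> set xs \<subseteq> A \<longrightarrow> f s xs \<in> A)"

definition hom :: "('f \<Rightarrow> nat) \<Rightarrow> 'a set \<Rightarrow> ('f \<Rightarrow> 'a list \<Rightarrow> 'a)
                    \<Rightarrow> 'b set \<Rightarrow> ('f \<Rightarrow> 'b list \<Rightarrow> 'b) \<Rightarrow> ('a \<Rightarrow> 'b) \<Rightarrow> bool" where
  "hom ar A f B g h \<longleftrightarrow> (\<forall>x\<in>A. h x \<in> B) \<and>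
     (\<forall>s xs. length xs = ar s \<and> set xs \<subseteq> A \<longrightarrow> h (f s xs) = g s (map h xs))"

definition congruence :: "('f \<Rightarrow> nat) \<Rightarrow> 'a set \<Rightarrow> ('f \<Rightarrow> 'a list \<Rightarrow> 'a) \<Rightarrow> 'a rel \<Rightarrow> bool" where
  "congruence ar A f \<theta> \<longleftrightarrow> equiv A \<theta> \<and>
     (\<forall>s xs ys. length xs = ar s \<and> length ys = ar s \<and> set xs \<subseteq> A \<and> set ys \<subseteq> A \<and>
        list_all2 (\<lambda>x y. (x, y) \<in> \<theta>) xs ys \<longrightarrow> (f s xs, f s ys) \<in> \<theta>)"

definition subdirectly_irreducible ::
    "('f \<Rightarrow> nat) \<Rightarrow> 'a set \<Rightarrow> ('f \<Rightarrow> 'a list \<Rightarrow> 'a) \<Rightarrow> bool" where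
  "subdirectly_irreducible ar A f \<longleftrightarrow> algebra ar A f \<and> (\<exists>a\<in>A. \<exists>b\<in>A. a \<noteq> b) \<and>
     (\<exists>\<mu>. congruence ar A f \<mu> \<and> \<mu> \<noteq> Id_on A \<and>
          (\<forall>\<theta>. congruence ar A f \<theta> \<and> \<theta> \<noteq> Id_on A \<longrightarrow> \<mu> \<subseteq> \<theta>))"

text \<open>Extension of the type by one unary operation symbol (None) interpreted by \<tau>.\<close>

definition ext_ar :: "('f \<Rightarrow> nat) \<Rightarrow> 'f option \<Rightarrow> nat" where
  "ext_ar ar o' = (case o' of None \<Rightarrow> 1 | Some s \<Rightarrow> ar s)"

definition ext_ops :: "('f \<Rightarrow> 'a list \<Rightarrow> 'a) \<Rightarrow> ('a \<Rightarrow> 'a) \<Rightarrow> 'f option \<Rightarrow> 'a list \<Rightarrow> 'a" where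
  "ext_ops f \<tau> o' xs = (case o' of None \<Rightarrow> \<tau> (hd xs) | Some s \<Rightarrow> f s xs)"

definition state_morphism ::
    "('f \<Rightarrow> nat) \<Rightarrow> 'a set \<Rightarrow> ('f \<Rightarrow> 'a list \<Rightarrow> 'a) \<Rightarrow> ('a \<Rightarrow> 'a) \<Rightarrow> bool" where
  "state_morphism ar A f \<tau> \<longleftrightarrow> algebra ar A f \<and> hom ar A f A f \<tau> \<and> (\<forall>x\<in>A. \<tau> (\<tau> x) = \<tau> x)"

definition prod_ops :: "('f \<Rightarrow> 'b list \<Rightarrow> 'b) \<Rightarrow> 'f \<Rightarrow> ('b \<times> 'b) list \<Rightarrow> 'b \<times> 'b" where
  "prod_ops g s xs = (g s (map fst xs), g s (map snd xs))"

definition diag_tau :: "'b \<times> 'b \<Rightarrow> 'b \<times> 'b" where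
  "diag_tau p = (fst p, fst p)"

definition sm_embedding ::
    "('f \<Rightarrow> nat) \<Rightarrow> 'a set \<Rightarrow> ('f \<Rightarrow> 'a list \<Rightarrow> 'a) \<Rightarrow> ('a \<Rightarrow> 'a)
     \<Rightarrow> 'b set \<Rightarrow> ('f \<Rightarrow> 'b list \<Rightarrow> 'b) \<Rightarrow> ('b \<Rightarrow> 'b) \<Rightarrow> ('a \<Rightarrow> 'b) \<Rightarrow> bool" where
  "sm_embedding ar A f \<tau> C g \<sigma> h \<longleftrightarrow> hom ar A f C g h \<and> inj_on h A \<and>
     (\<forall>x\<in>A. h (\<tau> x) = \<sigma> (h x))"

end

theory Submission
  imports Defs
begin

text \<open>Take a pair \<open>(a, b)\<close>, \<open>a \<noteq> b\<close>, in the monolith of \<open>(A, \<tau>)\<close> and, by Zorn's lemma, a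
  congruence \<open>\<phi>\<close> of \<open>A\<close> maximal among those not identifying \<open>a\<close> and \<open>b\<close>; then \<open>B = A/\<phi>\<close> is
  subdirectly irreducible. The map \<open>x \<mapsto> ([\<tau> x], [x])\<close> into \<open>B \<times> B\<close> is a homomorphism
  intertwining \<open>\<tau>\<close> with \<open>\<tau>\<^sub>B\<close>, and its kernel \<open>\<phi> \<inter> \<tau>\<^sup>-\<^sup>1\<phi>\<close> is, by idempotency of \<open>\<tau>\<close>, a
  congruence of \<open>(A, \<tau>)\<close> omitting \<open>(a, b)\<close>; as \<open>(a, b)\<close> lies in the monolith, the kernel is
  trivial.\<close>

lemma list_all2_in_Union_chain:
  assumes "subset.chain S C" "C \<noteq> {}" "list_all2 (\<lambda>x y. (x, y) \<in> \<Union>C) xs ys"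
  obtains \<theta> where "\<theta> \<in> C" "list_all2 (\<lambda>x y. (x, y) \<in> \<theta>) xs ys"
proof -
  have "set (zip xs ys) \<subseteq> \<Union>C"
    using assms(3) by (auto simp: list_all2_iff)
  then obtain \<theta> where "\<theta> \<in> C" "set (zip xs ys) \<subseteq> \<theta>"
    using finite_subset_Union_chain[OF _ _ assms(2,1)] by blast
  with assms(3) show thesis
    using that by (auto simp: list_all2_iff)
qed

lemma congruence_Id_on:
  fixes A :: "'a set"
  assumes "algebra ar A f"
  shows "congruence ar A f (Id_on A)"
proof -
  have "list_all2 (\<lambda>x y. (x, y) \<in> Id_on A) xs ys \<Longrightarrow> xs = ys" for xs ys :: "'a list"
    by (induction rule: list_all2_induct) auto
  then show ?thesis
    using assms unfolding congruence_def algebra_def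
    by (auto simp: equiv_def refl_on_def sym_def trans_def) (metis Id_onI)
qed

lemma congruence_Inter:
  assumes "F \<noteq> {}" and "\<And>\<theta>. \<theta> \<in> F \<Longrightarrow> congruence ar A f \<theta>"
  shows "congruence ar A f (\<Inter>F)"
proof -
  have eqv: "\<And>\<theta>. \<theta> \<in> F \<Longrightarrow> equiv A \<theta>"
    using assms(2) unfolding congruence_def by blast
  have "equiv A (\<Inter>F)"
    using assms(1) eqv unfolding equiv_def refl_on_def sym_def trans_def by blast
  moreover have "(f s xs, f s ys) \<in> \<theta>"
    if "\<theta> \<in> F" "length xs = ar s" "length ys = ar s" "set xs \<subseteq> A" "set ys \<subseteq> A"
      "list_all2 (\<lambda>x y. (x, y) \<in> \<Inter>F) xs ys" for \<theta> s xs ys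
  proof -
    have "list_all2 (\<lambda>x y. (x, y) \<in> \<theta>) xs ys"
      using that(6) by (rule list_all2_mono) (use that(1) in blast)
    then show ?thesis
      using assms(2)[OF that(1)] that(2-5) unfolding congruence_def by blast
  qed
  ultimately show ?thesis
    unfolding congruence_def by blast
qed

lemma congruence_Union_chain:
  assumes "C \<noteq> {}" and "subset.chain {\<theta>. congruence ar A f \<theta>} C"
  shows "congruence ar A f (\<Union>C)"
proof -
  have cong: "\<And>\<theta>. \<theta> \<in> C \<Longrightarrow> congruence ar A f \<theta>"
    using assms(2) unfolding subset_chain_def by blast
  then have eqv: "\<And>\<theta>. \<theta> \<in> C \<Longrightarrow> equiv A \<theta>"
    unfolding congruence_def by blast
  obtain \<theta>\<^sub>0 where "\<theta>\<^sub>0 \<in> C"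
    using assms(1) by blast
  have "equiv A (\<Union>C)"
  proof (rule equivI)
    show "\<Union>C \<subseteq> A \<times> A"
      using eqv equiv_type by blast
    show "refl_on A (\<Union>C)"
      using eqv[OF \<open>\<theta>\<^sub>0 \<in> C\<close>] \<open>\<theta>\<^sub>0 \<in> C\<close> unfolding equiv_def refl_on_def by blast
    show "sym (\<Union>C)"
      using eqv unfolding equiv_def sym_def by blast
    show "trans (\<Union>C)"
    proof (rule transI)
      fix x y z assume "(x, y) \<in> \<Union>C" "(y, z) \<in> \<Union>C"
      then obtain \<theta>\<^sub>1 \<theta>\<^sub>2 where \<theta>: "\<theta>\<^sub>1 \<in> C" "\<theta>\<^sub>2 \<in> C" "(x, y) \<in> \<theta>\<^sub>1" "(y, z) \<in> \<theta>\<^sub>2"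
        by blast
      have "\<theta>\<^sub>1 \<subseteq> \<theta>\<^sub>2 \<or> \<theta>\<^sub>2 \<subseteq> \<theta>\<^sub>1"
        using assms(2) \<theta>(1,2) unfolding subset_chain_def by blast
      then show "(x, z) \<in> \<Union>C"
        using \<theta> eqv[of \<theta>\<^sub>1] eqv[of \<theta>\<^sub>2] unfolding equiv_def trans_def by blast
    qed
  qed
  moreover have "(f s xs, f s ys) \<in> \<Union>C"
    if args: "length xs = ar s" "length ys = ar s" "set xs \<subseteq> A" "set ys \<subseteq> A"
      "list_all2 (\<lambda>x y. (x, y) \<in> \<Union>C) xs ys" for s xs ys
  proof -
    obtain \<theta> where "\<theta> \<in> C" "list_all2 (\<lambda>x y. (x, y) \<in> \<theta>) xs ys"
      using list_all2_in_Union_chain[OF assms(2,1) args(5)] .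
    then show ?thesis
      using cong args(1-4) unfolding congruence_def by blast
  qed
  ultimately show ?thesis
    unfolding congruence_def by blast
qed

lemma congruence_inv_image:
  assumes "algebra ar A f" and "hom ar A f B g h" and "congruence ar B g \<Theta>"
  shows "congruence ar A f (inv_image \<Theta> h \<inter> A \<times> A)"
proof -
  have hB: "\<And>x. x \<in> A \<Longrightarrow> h x \<in> B" and
    hf: "\<And>s xs. length xs = ar s \<Longrightarrow> set xs \<subseteq> A \<Longrightarrow> h (f s xs) = g s (map h xs)"
    using assms(2) unfolding hom_def by blast+
  have eqv: "equiv B \<Theta>" and
    compat: "\<And>s xs ys. length xs = ar s \<Longrightarrow> length ys = ar s \<Longrightarrow> set xs \<subseteq> B \<Longrightarrow> set ys \<subseteq> B
       \<Longrightarrow> list_all2 (\<lambda>x y. (x, y) \<in> \<Theta>) xs ys \<Longrightarrow> (g s xs, g s ys) \<in> \<Theta>"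
    using assms(3) unfolding congruence_def by blast+
  have "equiv A (inv_image \<Theta> h \<inter> A \<times> A)"
    using eqv hB unfolding equiv_def refl_on_def sym_def trans_def inv_image_def by blast
  moreover have "(f s xs, f s ys) \<in> inv_image \<Theta> h \<inter> A \<times> A"
    if "length xs = ar s" "length ys = ar s" "set xs \<subseteq> A" "set ys \<subseteq> A"
      "list_all2 (\<lambda>x y. (x, y) \<in> inv_image \<Theta> h \<inter> A \<times> A) xs ys" for s xs ys
  proof -
    have "list_all2 (\<lambda>x y. (x, y) \<in> \<Theta>) (map h xs) (map h ys)"
      using that(5) by (auto simp: list_all2_map1 list_all2_map2 elim: list_all2_mono)
    moreover have "set (map h xs) \<subseteq> B" "set (map h ys) \<subseteq> B"
      using that(3,4) hB by auto
    ultimately have "(g s (map h xs), g s (map h ys)) \<in> \<Theta>"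
      using compat that(1,2) by simp
    then show ?thesis
      using that(1-4) hf assms(1) unfolding algebra_def by auto
  qed
  ultimately show ?thesis
    unfolding congruence_def by blast
qed

lemma congruence_ext_ops_iff:
  "congruence (ext_ar ar) A (ext_ops f \<tau>) \<theta> \<longleftrightarrow>
     congruence ar A f \<theta> \<and> (\<forall>(x, y) \<in> \<theta>. (\<tau> x, \<tau> y) \<in> \<theta>)"
proof (cases "equiv A \<theta>")
  case True
  then have "\<theta> \<subseteq> A \<times> A" by (rule equiv_type)
  have "(\<forall>c xs ys. length xs = ext_ar ar c \<and> length ys = ext_ar ar c \<and> set xs \<subseteq> A \<and>
          set ys \<subseteq> A \<and> list_all2 (\<lambda>x y. (x, y) \<in> \<theta>) xs ys \<longrightarrow>
          (ext_ops f \<tau> c xs, ext_ops f \<tau> c ys) \<in> \<theta>) \<longleftrightarrow>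
        (\<forall>s xs ys. length xs = ar s \<and> length ys = ar s \<and> set xs \<subseteq> A \<and> set ys \<subseteq> A \<and>
          list_all2 (\<lambda>x y. (x, y) \<in> \<theta>) xs ys \<longrightarrow> (f s xs, f s ys) \<in> \<theta>) \<and>
        (\<forall>(x, y) \<in> \<theta>. (\<tau> x, \<tau> y) \<in> \<theta>)"
    (is "?ext \<longleftrightarrow> ?ops \<and> ?unary")
  proof
    assume ext: ?ext
    have ?ops
      using ext[rule_format, where c = "Some _"] by (simp add: ext_ar_def ext_ops_def)
    moreover have ?unary
    proof (intro ballI, clarify)
      fix x y assume "(x, y) \<in> \<theta>"
      then show "(\<tau> x, \<tau> y) \<in> \<theta>"
        using ext[rule_format, where c = None and xs = "[x]" and ys = "[y]"] \<open>\<theta> \<subseteq> A \<times> A\<close>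
        by (auto simp: ext_ar_def ext_ops_def)
    qed
    ultimately show "?ops \<and> ?unary" ..
  next
    assume both: "?ops \<and> ?unary"
    then have ops: ?ops by (rule conjunct1)
    from both have unary: ?unary by (rule conjunct2)
    show ?ext
    proof (intro allI impI)
      fix c xs ys
      assume args: "length xs = ext_ar ar c \<and> length ys = ext_ar ar c \<and> set xs \<subseteq> A \<and>
        set ys \<subseteq> A \<and> list_all2 (\<lambda>x y. (x, y) \<in> \<theta>) xs ys"
      show "(ext_ops f \<tau> c xs, ext_ops f \<tau> c ys) \<in> \<theta>"
      proof (cases c)
        case None
        then obtain x y where "xs = [x]" "ys = [y]"
          using args by (auto simp: ext_ar_def length_Suc_conv)
        then show ?thesis
          using None args unary by (auto simp: ext_ops_def)
      next
        case (Some s)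
        then show ?thesis
          using args ops by (simp add: ext_ar_def ext_ops_def)
      qed
    qed
  qed
  then show ?thesis
    unfolding congruence_def by (simp only: conj_assoc)
qed (simp add: congruence_def)

lemma maximal_congruence_separating:
  assumes "algebra ar A f" and "a \<noteq> b"
  obtains \<phi> where "congruence ar A f \<phi>" and "(a, b) \<notin> \<phi>"
    and "\<And>\<theta>. congruence ar A f \<theta> \<Longrightarrow> \<phi> \<subseteq> \<theta> \<Longrightarrow> (a, b) \<notin> \<theta> \<Longrightarrow> \<theta> = \<phi>"
proof -
  define S where "S = {\<theta>. congruence ar A f \<theta> \<and> (a, b) \<notin> \<theta>}"
  have "Id_on A \<in> S"
    using congruence_Id_on[OF assms(1)] assms(2) unfolding S_def by blast
  moreover have "\<Union>C \<in> S" if "C \<noteq> {}" and chain: "subset.chain S C" for C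
  proof -
    have "subset.chain {\<theta>. congruence ar A f \<theta>} C"
      using chain unfolding subset_chain_def S_def by blast
    then have "congruence ar A f (\<Union>C)"
      using \<open>C \<noteq> {}\<close> by (rule congruence_Union_chain[rotated])
    moreover have "(a, b) \<notin> \<Union>C"
      using chain unfolding subset_chain_def S_def by blast
    ultimately show ?thesis
      unfolding S_def by blast
  qed
  ultimately obtain \<phi> where "\<phi> \<in> S" and "\<forall>\<theta>\<in>S. \<phi> \<subseteq> \<theta> \<longrightarrow> \<theta> = \<phi>"
    using subset_Zorn_nonempty[of S] by blast
  then show thesis
    using that unfolding S_def by blast
qed

lemma equiv_neq_Id_onE:
  assumes "equiv A \<theta>" and "\<theta> \<noteq> Id_on A"
  obtains x y where "(x, y) \<in> \<theta>" and "x \<noteq> y" and "x \<in> A" and "y \<in> A"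
proof -
  have "Id_on A \<subseteq> \<theta>" and "\<theta> \<subseteq> A \<times> A"
    using assms(1) unfolding equiv_def refl_on_def by auto
  then show thesis
    using assms(2) that by auto
qed

lemma congruence_total:
  assumes "algebra ar A f"
  shows "congruence ar A f (A \<times> A)"
  using assms unfolding congruence_def algebra_def
  by (auto simp: equiv_def refl_on_def sym_def trans_def)

lemma subdirectly_irreducibleI:
  assumes "algebra ar B g" and "c \<in> B" and "d \<in> B" and "c \<noteq> d"
    and "\<And>\<Theta>. congruence ar B g \<Theta> \<Longrightarrow> \<Theta> \<noteq> Id_on B \<Longrightarrow> (c, d) \<in> \<Theta>"
  shows "subdirectly_irreducible ar B g"
proof -
  define \<mu> where "\<mu> = \<Inter>{\<Theta>. congruence ar B g \<Theta> \<and> (c, d) \<in> \<Theta>}"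
  have "congruence ar B g \<mu>"
    unfolding \<mu>_def
  proof (rule congruence_Inter)
    show "{\<Theta>. congruence ar B g \<Theta> \<and> (c, d) \<in> \<Theta>} \<noteq> {}"
      using congruence_total[OF assms(1)] assms(2,3) by blast
  qed blast
  moreover have "(c, d) \<in> \<mu>"
    unfolding \<mu>_def by blast
  then have "\<mu> \<noteq> Id_on B"
    using assms(4) by auto
  moreover have "\<forall>\<Theta>. congruence ar B g \<Theta> \<and> \<Theta> \<noteq> Id_on B \<longrightarrow> \<mu> \<subseteq> \<Theta>"
    using assms(5) unfolding \<mu>_def by (simp add: Inf_lower)
  ultimately show ?thesis
    unfolding subdirectly_irreducible_def using assms(1-4) by blast
qed

definition quotient_ops :: "'a rel \<Rightarrow> ('f \<Rightarrow> 'a list \<Rightarrow> 'a) \<Rightarrow> 'f \<Rightarrow> 'a set list \<Rightarrow> 'a set" where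
  "quotient_ops \<theta> f s Xs = \<theta> `` {f s (map (\<lambda>X. SOME x. x \<in> X) Xs)}"

lemma some_in_quotient:
  assumes "equiv A \<theta>" and "X \<in> A // \<theta>"
  shows "(SOME x. x \<in> X) \<in> A" and "\<theta> `` {SOME x. x \<in> X} = X"
proof -
  obtain x where x: "x \<in> A" "X = \<theta> `` {x}"
    using assms(2) by (rule quotientE)
  then have "(SOME x. x \<in> X) \<in> X"
    using equiv_class_self[OF assms(1)] by (metis someI)
  then have "(x, SOME x. x \<in> X) \<in> \<theta>"
    using x(2) by blast
  then show "(SOME x. x \<in> X) \<in> A" and "\<theta> `` {SOME x. x \<in> X} = X"
    using assms(1) x(2) by (auto simp: equiv_class_eq_iff)
qed

lemma algebra_quotient:
  assumes "algebra ar A f" and "equiv A \<theta>"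
  shows "algebra ar (A // \<theta>) (quotient_ops \<theta> f)"
  unfolding algebra_def
proof (intro conjI allI impI)
  show "A // \<theta> \<noteq> {}"
    using assms(1) unfolding algebra_def by simp
  fix s Xs assume Xs: "length Xs = ar s \<and> set Xs \<subseteq> A // \<theta>"
  then have "set (map (\<lambda>X. SOME x. x \<in> X) Xs) \<subseteq> A"
    using some_in_quotient(1)[OF assms(2)] by auto
  then have "f s (map (\<lambda>X. SOME x. x \<in> X) Xs) \<in> A"
    using assms(1) Xs unfolding algebra_def by simp
  then show "quotient_ops \<theta> f s Xs \<in> A // \<theta>"
    unfolding quotient_ops_def by (rule quotientI)
qed

lemma hom_quotient:
  assumes "algebra ar A f" and "congruence ar A f \<theta>"
  shows "hom ar A f (A // \<theta>) (quotient_ops \<theta> f) (\<lambda>x. \<theta> `` {x})"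
  unfolding hom_def
proof (intro conjI ballI allI impI)
  have eqv: "equiv A \<theta>"
    using assms(2) unfolding congruence_def by blast
  show "\<theta> `` {x} \<in> A // \<theta>" if "x \<in> A" for x
    using that by (rule quotientI)
  fix s xs assume xs: "length xs = ar s \<and> set xs \<subseteq> A"
  define rep where "rep x = (SOME y. y \<in> \<theta> `` {x})" for x
  have rep: "rep x \<in> A" "(x, rep x) \<in> \<theta>" if "x \<in> A" for x
  proof -
    have "rep x \<in> A" and "\<theta> `` {rep x} = \<theta> `` {x}"
      using some_in_quotient[OF eqv quotientI[OF that]] unfolding rep_def by blast+
    then show "rep x \<in> A" and "(x, rep x) \<in> \<theta>"
      using eqv that by (simp_all add: eq_equiv_class_iff[symmetric])
  qed
  have "list_all2 (\<lambda>x y. (x, y) \<in> \<theta>) xs (map rep xs)"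
    using xs rep(2) by (auto simp: list_all2_map2 list_all2_same)
  moreover have "length (map rep xs) = ar s" and "set (map rep xs) \<subseteq> A"
    using xs rep(1) by auto
  ultimately have "(f s xs, f s (map rep xs)) \<in> \<theta>"
    using assms(2) xs unfolding congruence_def by blast
  moreover have "map (\<lambda>X. SOME x. x \<in> X) (map (\<lambda>x. \<theta> `` {x}) xs) = map rep xs"
    unfolding rep_def by simp
  ultimately show "\<theta> `` {f s xs} = quotient_ops \<theta> f s (map (\<lambda>x. \<theta> `` {x}) xs)"
    unfolding quotient_ops_def by (simp only: equiv_class_eq[OF eqv])
qed

text \<open>Every nontrivial congruence of the quotient pulls back to a congruence strictly above
  \<open>\<phi>\<close>, which by maximality identifies \<open>a\<close> and \<open>b\<close>.\<close>

lemma subdirectly_irreducible_quotient: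
  assumes alg: "algebra ar A f" and cong: "congruence ar A f \<phi>"
    and "a \<in> A" and "b \<in> A" and "(a, b) \<notin> \<phi>"
    and max: "\<And>\<theta>. congruence ar A f \<theta> \<Longrightarrow> \<phi> \<subseteq> \<theta> \<Longrightarrow> (a, b) \<notin> \<theta> \<Longrightarrow> \<theta> = \<phi>"
  shows "subdirectly_irreducible ar (A // \<phi>) (quotient_ops \<phi> f)"
proof (rule subdirectly_irreducibleI)
  let ?q = "\<lambda>x. \<phi> `` {x}"
  have eqv: "equiv A \<phi>"
    using cong unfolding congruence_def by blast
  show "algebra ar (A // \<phi>) (quotient_ops \<phi> f)"
    using alg eqv by (rule algebra_quotient)
  show "?q a \<in> A // \<phi>" "?q b \<in> A // \<phi>"
    using \<open>a \<in> A\<close> \<open>b \<in> A\<close> by (auto intro: quotientI)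
  show "?q a \<noteq> ?q b"
    using eqv \<open>a \<in> A\<close> \<open>b \<in> A\<close> \<open>(a, b) \<notin> \<phi>\<close> by (simp add: eq_equiv_class_iff)
  fix \<Theta> assume \<Theta>: "congruence ar (A // \<phi>) (quotient_ops \<phi> f) \<Theta>" "\<Theta> \<noteq> Id_on (A // \<phi>)"
  define P where "P = inv_image \<Theta> ?q \<inter> A \<times> A"
  have "congruence ar A f P"
    unfolding P_def using alg hom_quotient[OF alg cong] \<Theta>(1) by (rule congruence_inv_image)
  moreover have "\<phi> \<subseteq> P"
  proof clarify
    fix x y assume "(x, y) \<in> \<phi>"
    moreover have "refl_on (A // \<phi>) \<Theta>"
      using \<Theta>(1) unfolding congruence_def equiv_def by blast
    ultimately show "(x, y) \<in> P"
      using eqv unfolding P_def refl_on_def by (auto simp: equiv_class_eq_iff intro: quotientI)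
  qed
  moreover have "P \<noteq> \<phi>"
  proof -
    have "equiv (A // \<phi>) \<Theta>"
      using \<Theta>(1) unfolding congruence_def by blast
    then obtain X Y where "(X, Y) \<in> \<Theta>" "X \<noteq> Y" "X \<in> A // \<phi>" "Y \<in> A // \<phi>"
      using \<Theta>(2) by (rule equiv_neq_Id_onE)
    then obtain x y where "x \<in> A" "y \<in> A" "(x, y) \<in> P" "(x, y) \<notin> \<phi>"
      using eqv unfolding P_def by (elim quotientE) (auto simp: eq_equiv_class_iff)
    then show ?thesis
      by blast
  qed
  ultimately have "(a, b) \<in> P"
    using max by blast
  then show "(?q a, ?q b) \<in> \<Theta>"
    unfolding P_def by simp
qed

lemma hom_comp:
  assumes "hom ar A f B g h" and "hom ar B g C k h'"
  shows "hom ar A f C k (h' \<circ> h)"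
  unfolding hom_def
proof (intro conjI ballI allI impI)
  show "(h' \<circ> h) x \<in> C" if "x \<in> A" for x
    using assms that unfolding hom_def by simp
  fix s xs assume xs: "length xs = ar s \<and> set xs \<subseteq> A"
  then have "length (map h xs) = ar s" and "set (map h xs) \<subseteq> B"
    using assms(1) unfolding hom_def by auto
  then show "(h' \<circ> h) (f s xs) = k s (map (h' \<circ> h) xs)"
    using assms xs unfolding hom_def by simp
qed

lemma hom_pair_prod_ops:
  assumes "hom ar A f B g h\<^sub>1" and "hom ar A f B g h\<^sub>2"
  shows "hom ar A f (B \<times> B) (prod_ops g) (\<lambda>x. (h\<^sub>1 x, h\<^sub>2 x))"
  using assms unfolding hom_def prod_ops_def by (simp add: comp_def)

lemma congruence_ext_ops_kernel:
  assumes "state_morphism ar A f \<tau>" and "congruence ar A f \<phi>"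
  shows "congruence (ext_ar ar) A (ext_ops f \<tau>) (\<phi> \<inter> inv_image \<phi> \<tau>)"
proof -
  have alg: "algebra ar A f" and hom: "hom ar A f A f \<tau>" and idem: "\<And>x. x \<in> A \<Longrightarrow> \<tau> (\<tau> x) = \<tau> x"
    using assms(1) unfolding state_morphism_def by blast+
  have "\<phi> \<subseteq> A \<times> A"
    using assms(2) unfolding congruence_def by (blast dest: equiv_type)
  then have "\<phi> \<inter> inv_image \<phi> \<tau> = \<Inter>{\<phi>, inv_image \<phi> \<tau> \<inter> A \<times> A}"
    by blast
  moreover have "congruence ar A f (\<Inter>{\<phi>, inv_image \<phi> \<tau> \<inter> A \<times> A})"
    using assms(2) congruence_inv_image[OF alg hom assms(2)] by (intro congruence_Inter) auto
  moreover have "(\<tau> x, \<tau> y) \<in> \<phi> \<inter> inv_image \<phi> \<tau>" if "(x, y) \<in> \<phi> \<inter> inv_image \<phi> \<tau>" for x y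
    using that idem \<open>\<phi> \<subseteq> A \<times> A\<close> by auto
  ultimately show ?thesis
    unfolding congruence_ext_ops_iff by auto
qed

lemma sm_embedding_diag_quotient:
  assumes sm: "state_morphism ar A f \<tau>" and cong: "congruence ar A f \<phi>"
    and kernel: "\<phi> \<inter> inv_image \<phi> \<tau> = Id_on A"
  shows "sm_embedding ar A f \<tau> (A // \<phi> \<times> A // \<phi>) (prod_ops (quotient_ops \<phi> f)) diag_tau
           (\<lambda>x. (\<phi> `` {\<tau> x}, \<phi> `` {x}))"
proof -
  have alg: "algebra ar A f" and hom: "hom ar A f A f \<tau>" and idem: "\<And>x. x \<in> A \<Longrightarrow> \<tau> (\<tau> x) = \<tau> x"
    using sm unfolding state_morphism_def by blast+
  let ?h = "\<lambda>x. (\<phi> `` {\<tau> x}, \<phi> `` {x})"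
  have "inj_on ?h A"
  proof (rule inj_onI)
    fix x y assume "x \<in> A" "y \<in> A" "?h x = ?h y"
    then have "(x, y) \<in> \<phi> \<inter> inv_image \<phi> \<tau>"
      using cong hom unfolding congruence_def hom_def by (auto simp: eq_equiv_class_iff)
    then show "x = y"
      using kernel by auto
  qed
  moreover have "hom ar A f (A // \<phi> \<times> A // \<phi>) (prod_ops (quotient_ops \<phi> f)) ?h"
    using hom_pair_prod_ops[OF hom_comp[OF hom] hom_quotient[OF alg cong]] hom_quotient[OF alg cong]
    by (simp add: comp_def)
  ultimately show ?thesis
    using idem unfolding sm_embedding_def diag_tau_def by simp
qed

theorem theorem3p6:
  fixes ar :: "'f \<Rightarrow> nat" and A :: "'a set"
    and f :: "'f \<Rightarrow> 'a list \<Rightarrow> 'a" and \<tau> :: "'a \<Rightarrow> 'a"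
  assumes "state_morphism ar A f \<tau>"
    and "subdirectly_irreducible (ext_ar ar) A (ext_ops f \<tau>)"
    and "\<not> subdirectly_irreducible ar A f"
  shows "\<exists>(B :: 'a set set) g. subdirectly_irreducible ar B g \<and>
           (\<exists>h. sm_embedding ar A f \<tau> (B \<times> B) (prod_ops g) diag_tau h)"
proof -
  have alg: "algebra ar A f"
    using assms(1) unfolding state_morphism_def by blast
  obtain \<mu> where \<mu>: "congruence (ext_ar ar) A (ext_ops f \<tau>) \<mu>" "\<mu> \<noteq> Id_on A"
    and monolith: "\<And>\<theta>. congruence (ext_ar ar) A (ext_ops f \<tau>) \<theta> \<Longrightarrow> \<theta> \<noteq> Id_on A \<Longrightarrow> \<mu> \<subseteq> \<theta>"
    using assms(2) unfolding subdirectly_irreducible_def by blast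
  obtain a b where ab: "(a, b) \<in> \<mu>" "a \<noteq> b" "a \<in> A" "b \<in> A"
    using \<mu> unfolding congruence_def by (blast elim: equiv_neq_Id_onE)
  obtain \<phi> where \<phi>: "congruence ar A f \<phi>" "(a, b) \<notin> \<phi>"
    and max: "\<And>\<theta>. congruence ar A f \<theta> \<Longrightarrow> \<phi> \<subseteq> \<theta> \<Longrightarrow> (a, b) \<notin> \<theta> \<Longrightarrow> \<theta> = \<phi>"
    using maximal_congruence_separating[OF alg ab(2)] by blast
  have "\<phi> \<inter> inv_image \<phi> \<tau> = Id_on A"
    using monolith[OF congruence_ext_ops_kernel[OF assms(1) \<phi>(1)]] ab(1) \<phi>(2) by blast
  then have "sm_embedding ar A f \<tau> (A // \<phi> \<times> A // \<phi>) (prod_ops (quotient_ops \<phi> f)) diag_tau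
               (\<lambda>x. (\<phi> `` {\<tau> x}, \<phi> `` {x}))"
    by (rule sm_embedding_diag_quotient[OF assms(1) \<phi>(1)])
  moreover have "subdirectly_irreducible ar (A // \<phi>) (quotient_ops \<phi> f)"
    using subdirectly_irreducible_quotient[OF alg \<phi>(1) ab(3,4) \<phi>(2) max] .
  ultimately show ?thesis
    by blast
qed

end
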